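(* Let $A_1$ and $A_2$ be finite-dimensional simple evolution algebras over a field $\mathbb{K}$. If $\dim\mathfrak{Diag}(A_i)>0$ for some $i\in\{1,2\}$, then $A_1\otimes A_2$ is a simple evolution algebra.
   Context: An evolution algebra over $\mathbb{K}$ is a $\mathbb{K}$-algebra with a basis $B=\{e_1,\dots,e_n\}$ (natural basis) such that $e_ie_j=0$ for $i\ne j$. A $\mathbb{K}$-algebra is simple if $A^2\neq 0$ and its only ideals are $0$ and $A$. For a simple finite-dimensional evolution algebra, any two natural bases agree up to reordering and nonzero rescaling of their elements; the diagonal subspace is $\mathfrak{Diag}(A):=\sum_{e\in B}(eA)e$ for a natural basis $B$, independent of this choice. The tensor product $A_1\otimes A_2$ of evolution algebras with natural bases $\{a_i\}$, $\{b_p\}$ is the evolution algebra with natural basis $\{a_i\otimes b_p\}$ and product $(a\otimes b)(a'\otimes b')=aa'\otimes bb'$. *)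

theory Defs
  imports Complex_Main "HOL-Library.Function_Algebras"
begin

text \<open>A finite-dimensional evolution algebra over a field 'k with natural basis
  indexed by a finite type 'i is represented concretely on the coordinate space
  'i \<Rightarrow> 'k.  The structure matrix W gives e_i e_i = sum_k W k i e_k and
  e_i e_j = 0 for i \<noteq> j; bilinearity then forces the product below.\<close>

definition escale :: "'k::field \<Rightarrow> ('i \<Rightarrow> 'k) \<Rightarrow> ('i \<Rightarrow> 'k)" where
  "escale c x = (\<lambda>j. c * x j)"

definition ebasis :: "'i \<Rightarrow> ('i \<Rightarrow> 'k::field)" where
  "ebasis i = (\<lambda>j. if j = i then 1 else 0)"

definition evmul :: "('i::finite \<Rightarrow> 'i \<Rightarrow> 'k::field) \<Rightarrow> ('i \<Rightarrow> 'k) \<Rightarrow> ('i \<Rightarrow> 'k) \<Rightarrow> ('i \<Rightarrow> 'k)" where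
  "evmul W x y = (\<lambda>k. \<Sum>i\<in>UNIV. x i * y i * W k i)"

definition evo_ideal :: "('i::finite \<Rightarrow> 'i \<Rightarrow> 'k::field) \<Rightarrow> ('i \<Rightarrow> 'k) set \<Rightarrow> bool" where
  "evo_ideal W I \<longleftrightarrow> module.subspace escale I \<and>
     (\<forall>x\<in>I. \<forall>y. evmul W x y \<in> I \<and> evmul W y x \<in> I)"

definition evo_simple :: "('i::finite \<Rightarrow> 'i \<Rightarrow> 'k::field) \<Rightarrow> bool" where
  "evo_simple W \<longleftrightarrow> (\<exists>x y. evmul W x y \<noteq> 0) \<and>
     (\<forall>I. evo_ideal W I \<longrightarrow> I = {0} \<or> I = UNIV)"

definition evo_diag :: "('i::finite \<Rightarrow> 'i \<Rightarrow> 'k::field) \<Rightarrow> ('i \<Rightarrow> 'k) set" where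
  "evo_diag W = {\<Sum>j\<in>UNIV. f j | f. \<forall>j. \<exists>y. f j = evmul W (evmul W (ebasis j) y) (ebasis j)}"

definition evo_diag_dim :: "('i::finite \<Rightarrow> 'i \<Rightarrow> 'k::field) \<Rightarrow> nat" where
  "evo_diag_dim W = vector_space.dim escale (evo_diag W)"

text \<open>Tensor product: natural basis a_i \<otimes> b_p indexed by pairs, with
  (a_i \<otimes> b_p)^2 = a_i^2 \<otimes> b_p^2.\<close>
definition evo_tensor :: "('i::finite \<Rightarrow> 'i \<Rightarrow> 'k::field) \<Rightarrow> ('j::finite \<Rightarrow> 'j \<Rightarrow> 'k)
    \<Rightarrow> ('i \<times> 'j \<Rightarrow> 'i \<times> 'j \<Rightarrow> 'k)" where
  "evo_tensor W V = (\<lambda>(k, q) (i, p). W k i * V q p)"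

end

theory Submission
  imports Defs
begin

(* A finite-dimensional evolution algebra with structure matrix W is simple iff A^2 = A, i.e. the
   map x |-> W x is onto, and its graph (an edge i -> k when e_k occurs in e_i e_i) is strongly
   connected.  For the tensor product, A^2 is the tensor product of the factors' squares and the
   graph is the product of the two graphs, so only strong connectivity needs work.  A nonzero
   diagonal space forces a loop in one factor, which then has paths of every sufficiently large
   length between any two vertices; in the other factor every vertex lies on a cycle, so paths of
   arbitrarily large length exist.  Hence both factors admit paths of one common length, and these
   combine into a path of the product graph. *)

interpretation escale: vector_space "escale :: 'k::field \<Rightarrow> ('i \<Rightarrow> 'k) \<Rightarrow> 'i \<Rightarrow> 'k"
  by unfold_locales (auto simp: escale_def fun_eq_iff algebra_simps)

lemma sum_fun_apply: "sum f A x = (\<Sum>a\<in>A. f a x)"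
  by (induction A rule: infinite_finite_induct) auto

lemma ebasis_neq_zero: "ebasis i \<noteq> (0 :: 'i \<Rightarrow> 'k::field)"
  by (auto simp: ebasis_def fun_eq_iff)

lemma sum_escale_ebasis: "(\<Sum>i\<in>UNIV. escale (x i) (ebasis i)) = (x :: 'i::finite \<Rightarrow> 'k::field)"
  by (simp add: fun_eq_iff escale_def ebasis_def sum_fun_apply if_distrib cong: if_cong)

lemma escale_subspace_eq_UNIV:
  fixes S :: "('i::finite \<Rightarrow> 'k::field) set"
  assumes "escale.subspace S" and "\<And>i. ebasis i \<in> S"
  shows "S = UNIV"
proof -
  have "(\<Sum>i\<in>UNIV. escale (x i) (ebasis i)) \<in> S" for x
    by (intro escale.subspace_sum[OF assms(1)] escale.subspace_scale[OF assms(1) assms(2)])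
  then show ?thesis by (metis UNIV_eq_I sum_escale_ebasis)
qed

lemma escale_dim_zero: "escale.dim {0 :: 'i \<Rightarrow> 'k::field} = 0"
  using escale.dim_le_card[of "{0}" "{}"] by (simp add: escale.span_zero)

lemma evmul_commute: "evmul W x y = evmul W y x"
  by (simp add: evmul_def mult.commute)

lemma evmul_ebasis: "evmul W x (ebasis i) = escale (x i) (\<lambda>k. W k i)"
proof
  fix k
  have "evmul W x (ebasis i) k = (\<Sum>j\<in>UNIV. if j = i then x i * W k i else 0)"
    unfolding evmul_def ebasis_def by (intro sum.cong) auto
  then show "evmul W x (ebasis i) k = escale (x i) (\<lambda>k. W k i) k"
    by (simp add: escale_def)
qed

lemma evo_idealI:
  assumes "escale.subspace I" and "\<And>x y. x \<in> I \<Longrightarrow> evmul W x y \<in> I"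
  shows "evo_ideal W I"
  using assms evmul_commute unfolding evo_ideal_def by metis

lemma evo_simple_ideal_eq_UNIV:
  assumes "evo_simple W" and "evo_ideal W I" and "x \<in> I" and "x \<noteq> 0"
  shows "I = UNIV"
  using assms unfolding evo_simple_def by blast

(* Column i of W is e_i e_i, so the range of this map is A^2. *)

definition evo_mat_vec :: "('i::finite \<Rightarrow> 'i \<Rightarrow> 'k::field) \<Rightarrow> ('i \<Rightarrow> 'k) \<Rightarrow> 'i \<Rightarrow> 'k" where
  "evo_mat_vec W x = (\<lambda>k. \<Sum>i\<in>UNIV. W k i * x i)"

lemma evmul_eq_evo_mat_vec: "evmul W x y = evo_mat_vec W (x * y)"
  by (simp add: evmul_def evo_mat_vec_def mult.commute)

lemma evo_mat_vec_eq_sum: "evo_mat_vec W x = (\<Sum>i\<in>UNIV. escale (x i) (\<lambda>k. W k i))"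
  by (simp add: fun_eq_iff evo_mat_vec_def escale_def sum_fun_apply mult.commute)

lemma module_hom_evo_mat_vec: "module_hom escale escale (evo_mat_vec W)"
  unfolding module_hom_iff
  by (simp add: escale.module_axioms evo_mat_vec_def escale_def fun_eq_iff
      algebra_simps sum.distrib sum_distrib_left)

lemma subspace_range_evo_mat_vec: "escale.subspace (range (evo_mat_vec W))"
  using module_hom_evo_mat_vec escale.subspace_UNIV by (rule module_hom.subspace_image)

lemma evo_simple_surj:
  assumes "evo_simple W"
  shows "surj (evo_mat_vec W)"
proof -
  have "evo_ideal W (range (evo_mat_vec W))"
    by (rule evo_idealI[OF subspace_range_evo_mat_vec]) (simp add: evmul_eq_evo_mat_vec)
  moreover obtain x y where "evmul W x y \<noteq> 0"
    using assms unfolding evo_simple_def by blast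
  moreover have "evmul W x y \<in> range (evo_mat_vec W)"
    by (simp add: evmul_eq_evo_mat_vec)
  ultimately show ?thesis
    using evo_simple_ideal_eq_UNIV[OF assms] by blast
qed

lemma evo_ideal_column:
  assumes "evo_ideal W I" and "x \<in> I" and "x i \<noteq> 0"
  shows "(\<lambda>k. W k i) \<in> I"
proof -
  have "escale.subspace I" and "evmul W x (ebasis i) \<in> I"
    using assms(1,2) unfolding evo_ideal_def by blast+
  then have "escale (inverse (x i)) (evmul W x (ebasis i)) \<in> I"
    by (rule escale.subspace_scale)
  moreover have "escale (inverse (x i)) (evmul W x (ebasis i)) = (\<lambda>k. W k i)"
    using assms(3) by (simp add: evmul_ebasis escale_def field_simps)
  ultimately show ?thesis by simp
qed

definition evo_graph :: "('i \<Rightarrow> 'i \<Rightarrow> 'k::zero) \<Rightarrow> ('i \<times> 'i) set" where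
  "evo_graph W = {(i, k). W k i \<noteq> 0}"

lemma evo_simple_graph_nonempty:
  assumes "evo_simple W"
  shows "evo_graph W \<noteq> {}"
proof
  assume "evo_graph W = {}"
  then have "evmul W x y = 0" for x y
    by (auto simp: evo_graph_def evmul_def fun_eq_iff)
  with assms show False unfolding evo_simple_def by blast
qed

lemma escale_subspace_support: "escale.subspace {x :: 'i \<Rightarrow> 'k::field. \<forall>j. x j \<noteq> 0 \<longrightarrow> j \<in> S}"
  by (auto simp: escale.subspace_def escale_def) (metis add_0)

lemma evo_ideal_support:
  fixes W :: "'i::finite \<Rightarrow> 'i \<Rightarrow> 'k::field"
  assumes closed: "evo_graph W `` S \<subseteq> S"
  shows "evo_ideal W {x. \<forall>j. x j \<noteq> 0 \<longrightarrow> j \<in> S}"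
proof (rule evo_idealI)
  show "escale.subspace {x :: 'i \<Rightarrow> 'k. \<forall>j. x j \<noteq> 0 \<longrightarrow> j \<in> S}"
    by (rule escale_subspace_support)
  show "evmul W x y \<in> {x. \<forall>j. x j \<noteq> 0 \<longrightarrow> j \<in> S}"
    if x: "x \<in> {x. \<forall>j. x j \<noteq> 0 \<longrightarrow> j \<in> S}" for x y
  proof -
    have "k \<in> S" if "evmul W x y k \<noteq> 0" for k
    proof -
      from that have "(\<Sum>j\<in>UNIV. x j * y j * W k j) \<noteq> 0"
        by (simp add: evmul_def)
      then obtain j where "j \<in> UNIV" and j: "x j * y j * W k j \<noteq> 0"
        by (rule sum.not_neutral_contains_not_neutral)
      then have "x j \<noteq> 0" by simp
      then have "j \<in> S"
        using x by simp
      moreover have "(j, k) \<in> evo_graph W"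
        using j by (simp add: evo_graph_def)
      ultimately show "k \<in> S"
        using closed by blast
    qed
    then show ?thesis by blast
  qed
qed

lemma evo_simple_connected:
  fixes W :: "'i::finite \<Rightarrow> 'i \<Rightarrow> 'k::field"
  assumes "evo_simple W"
  shows "(evo_graph W)\<^sup>* = UNIV"
proof -
  have "(i, k) \<in> (evo_graph W)\<^sup>*" for i k
  proof -
    let ?S = "(evo_graph W)\<^sup>* `` {i}"
    have "evo_graph W `` ?S \<subseteq> ?S"
    proof
      fix k assume "k \<in> evo_graph W `` ?S"
      then obtain j where "(i, j) \<in> (evo_graph W)\<^sup>*" and "(j, k) \<in> evo_graph W"
        by blast
      then have "(i, k) \<in> (evo_graph W)\<^sup>*"
        by (rule rtrancl_into_rtrancl)
      then show "k \<in> ?S" by simp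
    qed
    then have ideal: "evo_ideal W {x. \<forall>j. x j \<noteq> 0 \<longrightarrow> j \<in> ?S}"
      by (rule evo_ideal_support)
    have "(ebasis i :: 'i \<Rightarrow> 'k) \<in> {x. \<forall>j. x j \<noteq> 0 \<longrightarrow> j \<in> ?S}"
      by (simp add: ebasis_def)
    from evo_simple_ideal_eq_UNIV[OF assms ideal this ebasis_neq_zero]
    have "(ebasis k :: 'i \<Rightarrow> 'k) \<in> {x. \<forall>j. x j \<noteq> 0 \<longrightarrow> j \<in> ?S}"
      by (simp only: UNIV_I)
    then show ?thesis
      by (simp add: ebasis_def)
  qed
  then show ?thesis
    by (simp add: set_eq_iff split_paired_All)
qed

lemma evo_simpleI:
  assumes surj: "surj (evo_mat_vec W)" and conn: "(evo_graph W)\<^sup>* = UNIV"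
  shows "evo_simple W"
  unfolding evo_simple_def
proof (intro conjI allI impI)
  obtain w where "evo_mat_vec W w = ebasis undefined"
    using surj by (metis surjD)
  then have "evmul W w 1 \<noteq> 0"
    by (simp add: evmul_eq_evo_mat_vec ebasis_neq_zero)
  then show "\<exists>x y. evmul W x y \<noteq> 0" by blast
next
  fix I assume I: "evo_ideal W I"
  then have sub: "escale.subspace I"
    unfolding evo_ideal_def by blast
  have "I = UNIV" if "I \<noteq> {0}"
  proof -
    from that escale.subspace_0[OF sub] have "\<exists>x\<in>I. x \<noteq> 0"
      by blast
    then obtain x a where "x \<in> I" "x a \<noteq> 0"
      by (auto simp: fun_eq_iff)
    then have a: "(\<lambda>k. W k a) \<in> I"
      by (rule evo_ideal_column[OF I])
    have columns: "(\<lambda>k. W k b) \<in> I" for b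
    proof -
      have "(a, b) \<in> (evo_graph W)\<^sup>*" using conn by simp
      then show ?thesis
      proof (induction rule: rtrancl_induct)
        case base show ?case by (rule a)
      next
        case (step b c)
        then show ?case by (intro evo_ideal_column[OF I step.IH]) (simp add: evo_graph_def)
      qed
    qed
    have "evo_mat_vec W w \<in> I" for w
      unfolding evo_mat_vec_eq_sum
      by (intro escale.subspace_sum[OF sub] escale.subspace_scale[OF sub] columns)
    then have "z \<in> I" for z
      using surj by (metis surjD)
    then show "I = UNIV" by blast
  qed
  then show "I = {0} \<or> I = UNIV" by blast
qed

lemma evo_diag_term:
  "evmul W (evmul W (ebasis j) y) (ebasis j) = escale (y j * W j j) (\<lambda>k. W k j)"
  by (simp add: evmul_commute[of W "ebasis j"] evmul_ebasis escale_def)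

lemma evo_diag_eq_zero:
  fixes W :: "'i::finite \<Rightarrow> 'i \<Rightarrow> 'k::field"
  assumes "\<And>j. W j j = 0"
  shows "evo_diag W = {0}"
proof -
  have terms: "evmul W (evmul W (ebasis j) y) (ebasis j) = 0" for j y
    by (simp add: evo_diag_term assms escale_def fun_eq_iff)
  show ?thesis
  proof (intro equalityI subsetI)
    fix v assume "v \<in> evo_diag W"
    then obtain f where "v = (\<Sum>j\<in>UNIV. f j)"
      and "\<forall>j. \<exists>y. f j = evmul W (evmul W (ebasis j) y) (ebasis j)"
      unfolding evo_diag_def by blast
    then show "v \<in> {0}" by (simp add: terms)
  next
    fix v :: "'i \<Rightarrow> 'k" assume "v \<in> {0}"
    moreover have "(0 :: 'i \<Rightarrow> 'k) = (\<Sum>j\<in>UNIV. 0) \<and>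
        (\<forall>j. \<exists>y. 0 = evmul W (evmul W (ebasis j) y) (ebasis j))"
      by (simp add: terms)
    ultimately show "v \<in> evo_diag W"
      unfolding evo_diag_def by blast
  qed
qed

lemma evo_diag_dim_pos_imp_loop:
  assumes "evo_diag_dim W > 0"
  shows "\<exists>j. (j, j) \<in> evo_graph W"
proof (rule ccontr)
  assume "\<nexists>j. (j, j) \<in> evo_graph W"
  then have "evo_diag W = {0}"
    by (intro evo_diag_eq_zero) (simp add: evo_graph_def)
  with assms show False
    by (simp add: evo_diag_dim_def escale_dim_zero)
qed

lemma relpow_cycle_mult: "(a, a) \<in> R ^^ n \<Longrightarrow> (a, a) \<in> R ^^ (n * t)"
proof (induction t)
  case 0
  then show ?case by simp
next
  case (Suc t)
  then have "(a, a) \<in> R ^^ n O R ^^ (n * t)" by blast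
  then show ?case by (simp add: relpow_add[symmetric])
qed

lemma frequently_relpow_if_cycle:
  assumes "(a, b) \<in> R\<^sup>*" and "(b, b) \<in> R\<^sup>+"
  shows "\<exists>\<^sub>F n in sequentially. (a, b) \<in> R ^^ n"
  unfolding frequently_sequentially
proof
  fix N
  obtain d where d: "(a, b) \<in> R ^^ d"
    using assms(1) rtrancl_power by blast
  obtain c where "c > 0" and c: "(b, b) \<in> R ^^ c"
    using assms(2) trancl_power by blast
  have "(a, b) \<in> R ^^ (d + c * N)"
    using d relpow_cycle_mult[OF c] by (auto simp: relpow_add)
  moreover have "d + c * N \<ge> N"
    using \<open>c > 0\<close> by (simp add: trans_le_add2)
  ultimately show "\<exists>n\<ge>N. (a, b) \<in> R ^^ n" by blast
qed

lemma eventually_relpow_if_loop: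
  assumes "(a, j) \<in> R\<^sup>*" and "(j, b) \<in> R\<^sup>*" and "(j, j) \<in> R"
  shows "\<forall>\<^sub>F n in sequentially. (a, b) \<in> R ^^ n"
proof -
  obtain d1 d2 where d1: "(a, j) \<in> R ^^ d1" and d2: "(j, b) \<in> R ^^ d2"
    using assms(1,2) rtrancl_power by blast
  have "(a, b) \<in> R ^^ n" if "n \<ge> d1 + d2" for n
  proof -
    have "(j, j) \<in> R ^^ (1 * (n - d1 - d2))"
      using assms(3) by (intro relpow_cycle_mult) simp
    then have "(a, b) \<in> R ^^ (d1 + (n - d1 - d2) + d2)"
      using d1 d2 by (auto simp: relpow_add)
    with that show ?thesis by simp
  qed
  then show ?thesis by (rule eventually_sequentiallyI)
qed

lemma trancl_loop_if_strongly_connected: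
  assumes "R\<^sup>* = UNIV" and "(x, y) \<in> R"
  shows "(a, a) \<in> R\<^sup>+"
proof -
  have "(a, y) \<in> R\<^sup>+"
    using assms by (metis UNIV_I rtrancl_into_trancl1)
  moreover have "(y, a) \<in> R\<^sup>*"
    using assms(1) by simp
  ultimately show ?thesis by (rule trancl_rtrancl_trancl)
qed

definition prod_rel :: "('a \<times> 'a) set \<Rightarrow> ('b \<times> 'b) set \<Rightarrow> (('a \<times> 'b) \<times> ('a \<times> 'b)) set" where
  "prod_rel E F = {((a, c), (b, d)). (a, b) \<in> E \<and> (c, d) \<in> F}"

lemma relpow_prod_rel:
  "(a, b) \<in> E ^^ n \<Longrightarrow> (c, d) \<in> F ^^ n \<Longrightarrow> ((a, c), (b, d)) \<in> prod_rel E F ^^ n"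
proof (induction n arbitrary: b d)
  case 0
  then show ?case by simp
next
  case (Suc n)
  from Suc.prems(1) obtain b' where b': "(a, b') \<in> E ^^ n" "(b', b) \<in> E"
    by (rule relpow_Suc_E)
  from Suc.prems(2) obtain d' where d': "(c, d') \<in> F ^^ n" "(d', d) \<in> F"
    by (rule relpow_Suc_E)
  show ?case
    by (rule relpow_Suc_I[OF Suc.IH[OF b'(1) d'(1)]]) (simp add: prod_rel_def b'(2) d'(2))
qed

lemma prod_rel_strongly_connected:
  assumes E: "E\<^sup>* = UNIV" "E \<noteq> {}" and F: "F\<^sup>* = UNIV" "F \<noteq> {}"
    and loop: "(\<exists>j. (j, j) \<in> E) \<or> (\<exists>j. (j, j) \<in> F)"
  shows "(prod_rel E F)\<^sup>* = UNIV"
proof -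
  have "((a, c), (b, d)) \<in> (prod_rel E F)\<^sup>*" for a b c d
  proof -
    obtain x y x' y' where "(x, y) \<in> E" and "(x', y') \<in> F"
      using E(2) F(2) by auto
    then have freq_E: "\<exists>\<^sub>F n in sequentially. (a, b) \<in> E ^^ n"
      and freq_F: "\<exists>\<^sub>F n in sequentially. (c, d) \<in> F ^^ n"
      using E(1) F(1) by (simp_all add: frequently_relpow_if_cycle trancl_loop_if_strongly_connected)
    from loop have "\<exists>\<^sub>F n in sequentially. (a, b) \<in> E ^^ n \<and> (c, d) \<in> F ^^ n"
    proof (elim disjE exE)
      fix j assume "(j, j) \<in> E"
      then have "\<forall>\<^sub>F n in sequentially. (a, b) \<in> E ^^ n"
        using E(1) by (simp add: eventually_relpow_if_loop)
      with freq_F show ?thesis by (rule frequently_eventually_conj)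
    next
      fix j assume "(j, j) \<in> F"
      then have "\<forall>\<^sub>F n in sequentially. (c, d) \<in> F ^^ n"
        using F(1) by (simp add: eventually_relpow_if_loop)
      with freq_E show ?thesis by (rule frequently_eventually_frequently)
    qed
    then obtain n where "(a, b) \<in> E ^^ n \<and> (c, d) \<in> F ^^ n"
      by (rule frequentlyE)
    then have "((a, c), (b, d)) \<in> prod_rel E F ^^ n"
      by (intro relpow_prod_rel) simp_all
    then show ?thesis
      by (rule relpow_imp_rtrancl)
  qed
  then show ?thesis by (simp add: set_eq_iff split_paired_All)
qed

lemma evo_graph_tensor: "evo_graph (evo_tensor W V) = prod_rel (evo_graph W) (evo_graph V)"
  by (auto simp: evo_graph_def prod_rel_def evo_tensor_def)

lemma evo_mat_vec_tensor:
  "evo_mat_vec (evo_tensor W V) (\<lambda>(i, p). u i * v p) = (\<lambda>(k, q). evo_mat_vec W u k * evo_mat_vec V v q)"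
proof (intro ext, clarify)
  fix k q
  have "evo_mat_vec W u k * evo_mat_vec V v q = (\<Sum>i\<in>UNIV. \<Sum>p\<in>UNIV. (W k i * u i) * (V q p * v p))"
    unfolding evo_mat_vec_def by (rule sum_product)
  also have "\<dots> = (\<Sum>(i, p)\<in>UNIV \<times> UNIV. (W k i * u i) * (V q p * v p))"
    by (rule sum.cartesian_product)
  also have "\<dots> = evo_mat_vec (evo_tensor W V) (\<lambda>(i, p). u i * v p) (k, q)"
    unfolding evo_mat_vec_def evo_tensor_def UNIV_Times_UNIV
    by (intro sum.cong) (auto simp: algebra_simps)
  finally show "evo_mat_vec (evo_tensor W V) (\<lambda>(i, p). u i * v p) (k, q) =
      evo_mat_vec W u k * evo_mat_vec V v q" ..
qed

lemma surj_evo_mat_vec_tensor: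
  assumes "surj (evo_mat_vec W)" and "surj (evo_mat_vec V)"
  shows "surj (evo_mat_vec (evo_tensor W V))"
proof -
  have "ebasis kq \<in> range (evo_mat_vec (evo_tensor W V))" for kq
  proof (cases kq)
    case (Pair k q)
    obtain u v where "evo_mat_vec W u = ebasis k" and "evo_mat_vec V v = ebasis q"
      using assms by (metis surjD)
    then have "evo_mat_vec (evo_tensor W V) (\<lambda>(i, p). u i * v p) = ebasis (k, q)"
      by (simp add: evo_mat_vec_tensor ebasis_def fun_eq_iff)
    then show ?thesis
      unfolding Pair by (metis rangeI)
  qed
  then show ?thesis
    by (rule escale_subspace_eq_UNIV[OF subspace_range_evo_mat_vec])
qed

theorem corollary4p4:
  fixes W :: "'i::finite \<Rightarrow> 'i \<Rightarrow> 'k::field"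
    and V :: "'j::finite \<Rightarrow> 'j \<Rightarrow> 'k"
  assumes "evo_simple W" and "evo_simple V"
    and "evo_diag_dim W > 0 \<or> evo_diag_dim V > 0"
  shows "evo_simple (evo_tensor W V)"
proof (rule evo_simpleI)
  show "surj (evo_mat_vec (evo_tensor W V))"
    using assms(1,2) by (intro surj_evo_mat_vec_tensor evo_simple_surj)
  have "(\<exists>j. (j, j) \<in> evo_graph W) \<or> (\<exists>j. (j, j) \<in> evo_graph V)"
    using assms(3) by (auto dest: evo_diag_dim_pos_imp_loop)
  then show "(evo_graph (evo_tensor W V))\<^sup>* = UNIV"
    unfolding evo_graph_tensor using assms(1,2)
    by (intro prod_rel_strongly_connected evo_simple_connected evo_simple_graph_nonempty)
qed

end
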